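(* Let $P$ be a special product rule, $\Sigma$ a finite alphabet, $\mathcal A=\langle X,F,\Delta\rangle$ a polynomial $P$-automaton with finite $X$, $x_1\in X$, and let $I_n$ ($n\in\mathbb N$) be the ideal of $\mathbb Q[X]$ generated by $\{\tilde\Delta_wx_1:|w|\le n\}$. Let $N\in\mathbb N$ be such that $I_N=I_{N+1}=I_{N+2}=\cdots$. Then $[\![x_1]\!]_{\mathcal A}=\mathbb 0$ if and only if $([\![x_1]\!]_{\mathcal A})_w=0$ for all words $w\in\Sigma^*$ of length at most $N$.
   Context: Let $\Sigma^*$ be the finite words over $\Sigma$ with empty word $\varepsilon$. A series is $f:\Sigma^*\to\mathbb Q$, $f_w=f(w)$; $\mathbb 0$ is the zero series; $\delta_af$ ($a\in\Sigma$) is $w\mapsto f(aw)$. $\mathbb Q_0[X]$ is the set of polynomials of $\mathbb Q[X]$ with zero constant term. Terms over $X$ are generated by $u,v::=x\mid 0\mid c\cdot u\mid u+v\mid u*v$; a product rule is a term $P$ over $\{x,\dot x,y,\dot y\}$; $u\approx v$ iff $u,v$ denote the same polynomial. $P$ is special if $P(x+y,\dot x+\dot y,z,\dot z)\approx P(x,\dot x,z,\dot z)+P(y,\dot y,z,\dot z)$, $P(x,\dot x,y*z,P(y,\dot y,z,\dot z))\approx P(x*y,P(x,\dot x,y,\dot y),z,\dot z)$, $P(x,\dot x,y,\dot y)\approx P(y,\dot y,x,\dot x)$. For special $P$, every $D:X\to\mathbb Q_0[X]$ has a unique $\mathbb Q$-linear extension $\tilde D$ to $\mathbb Q_0[X]$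 with $\tilde Dx=Dx$ and $\tilde D(\alpha\beta)=P(\alpha,\tilde D\alpha,\beta,\tilde D\beta)$. A polynomial $P$-automaton is $\mathcal A=\langle X,F,\Delta\rangle$ with $F:X\to\mathbb Q$ and $\Delta_a:X\to\mathbb Q_0[X]$; $F$ extends to $\mathbb Q_0[X]$ by evaluation; $\tilde\Delta_\varepsilon\alpha=\alpha$, $\tilde\Delta_{aw}\alpha=\tilde\Delta_w\tilde\Delta_a\alpha$; $[\![\alpha]\!]_{\mathcal A}$ is the series $w\mapsto F(\tilde\Delta_w\alpha)$. *)

theory Defs
  imports Complex_Main "HOL-Library.Poly_Mapping"
begin

text \<open>Multivariate polynomials over Q in variables of type 'v:
  finitely supported maps from monomials (exponent vectors) to coefficients.\<close>
type_synonym 'v mpoly = "('v \<Rightarrow>\<^sub>0 nat) \<Rightarrow>\<^sub>0 rat"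

definition Var :: "'v \<Rightarrow> 'v mpoly" where
  "Var x = Poly_Mapping.single (Poly_Mapping.single x 1) 1"

definition Const :: "rat \<Rightarrow> 'v mpoly" where
  "Const c = Poly_Mapping.single 0 c"

definition Q0 :: "'v mpoly set" where
  "Q0 = {p. Poly_Mapping.lookup p 0 = 0}"

definition psubst :: "('v \<Rightarrow> 'w mpoly) \<Rightarrow> 'v mpoly \<Rightarrow> 'w mpoly" where
  "psubst \<sigma> p = (\<Sum>m\<in>Poly_Mapping.keys p. Const (Poly_Mapping.lookup p m) * (\<Prod>x\<in>Poly_Mapping.keys m. \<sigma> x ^ Poly_Mapping.lookup m x))"

definition peval :: "('v \<Rightarrow> rat) \<Rightarrow> 'v mpoly \<Rightarrow> rat" where
  "peval f p = (\<Sum>m\<in>Poly_Mapping.keys p. Poly_Mapping.lookup p m * (\<Prod>x\<in>Poly_Mapping.keys m. f x ^ Poly_Mapping.lookup m x))"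

text \<open>Variables of a product rule: x, x-dot, y, y-dot.\<close>
datatype rvar = RX | RDX | RY | RDY

datatype svar = SX | SDX | SY | SDY | SZ | SDZ

definition Papp :: "rvar mpoly \<Rightarrow> 'w mpoly \<Rightarrow> 'w mpoly \<Rightarrow> 'w mpoly \<Rightarrow> 'w mpoly \<Rightarrow> 'w mpoly" where
  "Papp P a da b db = psubst (\<lambda>v. case v of RX \<Rightarrow> a | RDX \<Rightarrow> da | RY \<Rightarrow> b | RDY \<Rightarrow> db) P"

definition special :: "rvar mpoly \<Rightarrow> bool" where
  "special P \<longleftrightarrow>
     (let x = Var SX; dx = Var SDX; y = Var SY; dy = Var SDY; z = Var SZ; dz = Var SDZ in
       Papp P (x + y) (dx + dy) z dz = Papp P x dx z dz + Papp P y dy z dz \<and>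
       Papp P x dx (y * z) (Papp P y dy z dz) = Papp P (x * y) (Papp P x dx y dy) z dz \<and>
       Papp P x dx y dy = Papp P y dy x dx)"

text \<open>The (unique) Q-linear extension of D to Q_0[X] obeying the product rule P;
  set to 0 outside Q_0[X] to make the function unique.\<close>
definition ext :: "rvar mpoly \<Rightarrow> ('v \<Rightarrow> 'v mpoly) \<Rightarrow> 'v mpoly \<Rightarrow> 'v mpoly" where
  "ext P D = (THE f.
      (\<forall>x. f (Var x) = D x) \<and>
      (\<forall>\<alpha>\<in>Q0. \<forall>\<beta>\<in>Q0. f (\<alpha> + \<beta>) = f \<alpha> + f \<beta>) \<and>
      (\<forall>c. \<forall>\<alpha>\<in>Q0. f (Const c * \<alpha>) = Const c * f \<alpha>) \<and>
      (\<forall>\<alpha>\<in>Q0. \<forall>\<beta>\<in>Q0. f (\<alpha> * \<beta>) = Papp P \<alpha> (f \<alpha>) \<beta> (f \<beta>)) \<and>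
      (\<forall>\<alpha>. \<alpha> \<notin> Q0 \<longrightarrow> f \<alpha> = 0))"

text \<open>tilde Delta_w, with tilde Delta_{aw} = tilde Delta_w o tilde Delta_a.\<close>
fun deltaw :: "rvar mpoly \<Rightarrow> ('a \<Rightarrow> 'v \<Rightarrow> 'v mpoly) \<Rightarrow> 'a list \<Rightarrow> 'v mpoly \<Rightarrow> 'v mpoly" where
  "deltaw P \<Delta> [] \<alpha> = \<alpha>"
| "deltaw P \<Delta> (a # w) \<alpha> = deltaw P \<Delta> w (ext P (\<Delta> a) \<alpha>)"

definition sem :: "rvar mpoly \<Rightarrow> ('v \<Rightarrow> rat) \<Rightarrow> ('a \<Rightarrow> 'v \<Rightarrow> 'v mpoly) \<Rightarrow> 'v mpoly \<Rightarrow> 'a list \<Rightarrow> rat" where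
  "sem P F \<Delta> \<alpha> w = peval F (deltaw P \<Delta> w \<alpha>)"

definition ideal_gen :: "'v mpoly set \<Rightarrow> 'v mpoly set" where
  "ideal_gen G = {p. \<exists>(k::nat) r g. (\<forall>i<k. g i \<in> G) \<and> p = (\<Sum>i<k. r i * g i)}"

end

theory Submission
  imports Defs
begin

text \<open>Evaluation at the point F is a ring homomorphism from Q[X] to Q, so it vanishes on
  the ideal generated by any set of polynomials on which it vanishes. For a word w with
  |w| \<ge> N, the derivative \<Delta>_w x1 lies in I_|w| = I_N, i.e. it is a Q[X]-combination of the
  \<Delta>_u x1 with |u| \<le> N, whose values under F are the given coefficients of the series.
  The stabilisation of the chain is assumed outright.\<close>

definition peval_monom :: "('v \<Rightarrow> rat) \<Rightarrow> ('v \<Rightarrow>\<^sub>0 nat) \<Rightarrow> rat" where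
  "peval_monom f m = (\<Prod>x\<in>Poly_Mapping.keys m. f x ^ Poly_Mapping.lookup m x)"

lemma peval_monom_eq_prod_superset:
  assumes "finite S" and "Poly_Mapping.keys m \<subseteq> S"
  shows "peval_monom f m = (\<Prod>x\<in>S. f x ^ Poly_Mapping.lookup m x)"
  unfolding peval_monom_def
  using assms by (intro prod.mono_neutral_left) (auto simp: in_keys_iff)

lemma peval_monom_add: "peval_monom f (m + n) = peval_monom f m * peval_monom f n"
proof -
  let ?S = "Poly_Mapping.keys m \<union> Poly_Mapping.keys n"
  have "finite ?S" by simp
  then have "peval_monom f (m + n) = (\<Prod>x\<in>?S. f x ^ Poly_Mapping.lookup (m + n) x)"
    by (rule peval_monom_eq_prod_superset) (rule keys_add)
  also have "\<dots> =
      (\<Prod>x\<in>?S. f x ^ Poly_Mapping.lookup m x * f x ^ Poly_Mapping.lookup n x)"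
    by (simp add: lookup_add power_add)
  also have "\<dots> = peval_monom f m * peval_monom f n"
    using \<open>finite ?S\<close>
    by (subst (1 2) peval_monom_eq_prod_superset[of ?S]) (auto simp: prod.distrib)
  finally show ?thesis .
qed

lemma peval_eq_sum_monom:
  "peval f p = (\<Sum>m\<in>Poly_Mapping.keys p. Poly_Mapping.lookup p m * peval_monom f m)"
  unfolding peval_def peval_monom_def ..

lemma peval_0 [simp]: "peval f 0 = 0"
  unfolding peval_def by simp

lemma peval_add: "peval f (p + q) = peval f p + peval f q"
  unfolding peval_eq_sum_monom
  by (rule setsum_keys_plus_distrib) (auto simp: distrib_right)

lemma peval_sum: "peval f (\<Sum>i\<in>A. g i) = (\<Sum>i\<in>A. peval f (g i))"
  by (induction A rule: infinite_finite_induct) (auto simp: peval_add)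

lemma peval_single: "peval f (Poly_Mapping.single m c) = c * peval_monom f m"
  unfolding peval_eq_sum_monom by simp

lemma poly_mapping_sum_single:
  "p = (\<Sum>m\<in>Poly_Mapping.keys p. Poly_Mapping.single m (Poly_Mapping.lookup p m))"
  by (rule poly_mapping_eqI)
    (auto simp: lookup_sum lookup_single when_def in_keys_iff sum.delta)

lemma peval_mult: "peval f (p * q) = peval f p * peval f q"
proof -
  let ?P = "Poly_Mapping.keys p" and ?Q = "Poly_Mapping.keys q"
  have "p * q = (\<Sum>m\<in>?P. Poly_Mapping.single m (Poly_Mapping.lookup p m)) *
                (\<Sum>n\<in>?Q. Poly_Mapping.single n (Poly_Mapping.lookup q n))"
    by (subst (1 2) poly_mapping_sum_single) (rule refl)
  also have "\<dots> = (\<Sum>m\<in>?P. \<Sum>n\<in>?Q.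
      Poly_Mapping.single (m + n) (Poly_Mapping.lookup p m * Poly_Mapping.lookup q n))"
    by (simp add: sum_product mult_single)
  finally have "peval f (p * q) = (\<Sum>m\<in>?P. \<Sum>n\<in>?Q.
      Poly_Mapping.lookup p m * Poly_Mapping.lookup q n * (peval_monom f m * peval_monom f n))"
    by (simp add: peval_sum peval_single peval_monom_add)
  also have "\<dots> = peval f p * peval f q"
    unfolding peval_eq_sum_monom sum_product by (simp add: algebra_simps)
  finally show ?thesis .
qed

lemma generator_in_ideal_gen: "g \<in> G \<Longrightarrow> g \<in> ideal_gen G"
  unfolding ideal_gen_def
  by (intro CollectI exI[of _ 1] exI[of _ "\<lambda>_. 1"] exI[of _ "\<lambda>_. g"]) simp

lemma peval_ideal_gen_eq_0:
  assumes "\<And>g. g \<in> G \<Longrightarrow> peval f g = 0" and "p \<in> ideal_gen G"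
  shows "peval f p = 0"
proof -
  from \<open>p \<in> ideal_gen G\<close> obtain k :: nat and r g
    where "\<forall>i<k. g i \<in> G" and "p = (\<Sum>i<k. r i * g i)"
    unfolding ideal_gen_def mem_Collect_eq by blast
  with assms(1) show ?thesis by (simp add: peval_sum peval_mult)
qed

theorem mainTheorem14:
  fixes P :: "rvar mpoly"
    and F :: "'x::finite \<Rightarrow> rat"
    and \<Delta> :: "'a::finite \<Rightarrow> 'x \<Rightarrow> 'x mpoly"
    and x1 :: 'x
    and I :: "nat \<Rightarrow> 'x mpoly set"
    and N :: nat
  assumes "special P"
    and "\<forall>a x. \<Delta> a x \<in> Q0"
    and "\<forall>n. I n = ideal_gen {deltaw P \<Delta> w (Var x1) | w. length w \<le> n}"
    and "\<forall>n\<ge>N. I n = I N"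
  shows "(\<forall>w. sem P F \<Delta> (Var x1) w = 0) \<longleftrightarrow>
         (\<forall>w. length w \<le> N \<longrightarrow> sem P F \<Delta> (Var x1) w = 0)"
proof
  assume "\<forall>w. sem P F \<Delta> (Var x1) w = 0"
  then show "\<forall>w. length w \<le> N \<longrightarrow> sem P F \<Delta> (Var x1) w = 0" by blast
next
  assume short: "\<forall>w. length w \<le> N \<longrightarrow> sem P F \<Delta> (Var x1) w = 0"
  have in_I_N: "deltaw P \<Delta> w (Var x1) \<in> I N" for w
  proof -
    have "deltaw P \<Delta> w (Var x1) \<in> I (max N (length w))"
      unfolding assms(3)[rule_format] by (intro generator_in_ideal_gen) auto
    also have "I (max N (length w)) = I N"
      using assms(4) max.cobounded1 by blast
    finally show ?thesis .
  qed
  show "\<forall>w. sem P F \<Delta> (Var x1) w = 0"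
  proof
    fix w
    have "peval F g = 0" if "g \<in> {deltaw P \<Delta> u (Var x1) | u. length u \<le> N}" for g
      using that short unfolding sem_def by blast
    then show "sem P F \<Delta> (Var x1) w = 0"
      using in_I_N[of w] unfolding sem_def assms(3)[rule_format]
      by (rule peval_ideal_gen_eq_0)
  qed
qed

end
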